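(* Let $k\geq 1$ and let $a,b,\alpha,\beta$ be positive real numbers with $a\geq b$. Define \[ \theta(t)=\frac{(\alpha+\beta t)^{a-b}\, e^{t\left(\frac{ka\beta\gamma-b\beta\gamma}{k}\right)}\,\Gamma(\alpha+\beta t)^a}{k^{-\frac{b\beta t}{k}}\,\Gamma_k(\alpha+\beta t)^b},\qquad t\in(0,\infty). \] Then $\theta$ is increasing on $(0,\infty)$, and for every $t\in(0,1)$, \[ \frac{\alpha^{a-b}e^{-t\left(\frac{ka\beta\gamma-b\beta\gamma}{k}\right)}\,\Gamma(\alpha)^a}{(\alpha+\beta t)^{a-b}\,k^{\frac{b\beta t}{k}}\,\Gamma_k(\alpha)^b} \leq\frac{\Gamma(\alpha+\beta t)^a}{\Gamma_k(\alpha+\beta t)^b} \leq\frac{(\alpha+\beta)^{a-b}e^{(1-t)\left(\frac{ka\beta\gamma-b\beta\gamma}{k}\right)}\,\Gamma(\alpha+\beta)^a}{(\alpha+\beta t)^{a-b}\,k^{\frac{b\beta}{k}(t-1)}\,\Gamma_k(\alpha+\beta)^b}. \]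
   Context: $\Gamma$ is Euler's Gamma function and $\gamma$ is the Euler–Mascheroni constant. For $k>0$ and $t>0$, the $k$-Gamma function is $\Gamma_k(t)=\int_0^\infty e^{-x^k/k}x^{t-1}\,dx$. *)

theory Defs
  imports "HOL-Analysis.Analysis"
begin

definition k_Gamma :: "real \<Rightarrow> real \<Rightarrow> real" where
  "k_Gamma k t = integral {0<..} (\<lambda>x::real. exp (- (x powr k) / k) * x powr (t - 1))"

end

theory Submission
  imports Defs
begin

text \<open>
  The substitution \<open>u = x\<^sup>k / k\<close> gives \<open>\<Gamma>\<^sub>k(s) = k\<^bsup>s/k - 1\<^esup> \<Gamma>(s/k)\<close>, so \<open>ln \<theta>\<close> is an explicit
  combination of \<open>ln (\<alpha> + \<beta> t)\<close>, \<open>ln \<Gamma>(\<alpha> + \<beta> t)\<close> and \<open>ln \<Gamma>((\<alpha> + \<beta> t)/k)\<close>. Its derivative is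
  \<open>\<beta>\<close> times \<open>a (\<psi>(s + 1) + \<gamma>) - (b/k) (\<psi>(s/k + 1) + \<gamma>)\<close> with \<open>s = \<alpha> + \<beta> t\<close>, which is
  nonnegative because \<open>\<psi>(x) + \<gamma>\<close> is nonnegative and increasing for \<open>x \<ge> 1\<close> and \<open>b/k \<le> a\<close>.
  The two-sided bound is \<open>\<theta>(0) \<le> \<theta>(t) \<le> \<theta>(1)\<close> rearranged.
\<close>

lemma Gamma_has_integral_greaterThan:
  assumes "x > (0::real)"
  shows "((\<lambda>t. t powr (x - 1) / exp t) has_integral Gamma x) {0<..}"
proof -
  have "((\<lambda>t. t powr (x - 1) / exp t) has_integral Gamma x) {0..}"
    by (rule Gamma_integral_real) fact
  hence "((\<lambda>t. if t \<in> {0<..} then t powr (x - 1) / exp t else 0) has_integral Gamma x) {0..}"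
    by (rule has_integral_spike [of "{0}", rotated 2]) auto
  also have "?this = ?thesis"
    by (subst has_integral_restrict) auto
  finally show ?thesis .
qed

lemma k_Gamma_eq_Gamma:
  fixes k s :: real
  assumes k: "k > 0" and s: "s > 0"
  shows "k_Gamma k s = k powr (s / k - 1) * Gamma (s / k)"
proof -
  define g where "g = (\<lambda>x::real. x powr k / k)"
  define g' where "g' = (\<lambda>x::real. x powr (k - 1))"
  define f where "f = (\<lambda>u::real. u powr (s / k - 1) / exp u)"
  have g_image: "g ` {0<..} = {0<..}"
  proof
    show "g ` {0<..} \<subseteq> {0<..}" using k by (auto simp: g_def)
    show "{0<..} \<subseteq> g ` {0<..}"
    proof
      fix u :: real assume u: "u \<in> {0<..}"
      have "g ((k * u) powr (1 / k)) = u"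
        using k u by (simp add: g_def powr_powr)
      moreover have "(k * u) powr (1 / k) \<in> {0<..}" using k u by simp
      ultimately show "u \<in> g ` {0<..}" by (metis image_eqI)
    qed
  qed
  have g_deriv: "(g has_field_derivative g' x) (at x within {0<..})" if "x \<in> {0<..}" for x
    using that k unfolding g_def g'_def
    by (auto intro!: derivative_eq_intros simp: field_simps)
  have g_inj: "inj_on g {0<..}"
  proof (rule inj_onI)
    fix x y :: real assume "x \<in> {0<..}" "y \<in> {0<..}" "g x = g y"
    hence "(x powr k) powr (1/k) = (y powr k) powr (1/k)" using k by (simp add: g_def)
    thus "x = y" using k \<open>x \<in> {0<..}\<close> \<open>y \<in> {0<..}\<close> by (simp add: powr_powr)
  qed
  have f_integral: "(f has_integral Gamma (s / k)) (g ` {0<..})"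
    unfolding f_def g_image using k s by (intro Gamma_has_integral_greaterThan) simp
  have "f absolutely_integrable_on (g ` {0<..})"
    by (rule nonnegative_absolutely_integrable_1) (use f_integral in \<open>auto simp: f_def\<close>)
  with f_integral have change_vars: "integral {0<..} (\<lambda>x. \<bar>g' x\<bar> * f (g x)) = Gamma (s / k)"
    using has_absolute_integral_change_of_variables_1'[OF _ g_deriv g_inj, of f "Gamma (s/k)"]
    by (simp add: integral_unique)
  have integrand: "\<bar>g' x\<bar> * f (g x) = k powr (1 - s / k) * (exp (- (x powr k) / k) * x powr (s - 1))"
    if "x \<in> {0<..}" for x
  proof -
    have x: "x > 0" using that by simp
    have "k * (s / k - 1) = s - k" using k by (simp add: field_simps)
    hence "(x powr k / k) powr (s / k - 1) = x powr (s - k) / k powr (s / k - 1)"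
      using x k by (simp add: powr_divide powr_powr)
    also have "\<dots> = x powr (s - k) * k powr (1 - s / k)"
      using k by (simp add: divide_inverse flip: powr_minus)
    finally have "(x powr k / k) powr (s / k - 1) = x powr (s - k) * k powr (1 - s / k)" .
    moreover have "x powr (k - 1) * x powr (s - k) = x powr (s - 1)"
      using x by (simp flip: powr_add)
    ultimately show ?thesis
      using x by (simp add: g_def g'_def f_def exp_minus field_simps)
  qed
  have "Gamma (s / k) = integral {0<..} (\<lambda>x. k powr (1 - s / k) * (exp (- (x powr k) / k) * x powr (s - 1)))"
    unfolding change_vars[symmetric] by (intro integral_cong) (use integrand in auto)
  also have "\<dots> = k powr (1 - s / k) * k_Gamma k s"
    unfolding k_Gamma_def by simp
  finally have "k powr (s / k - 1) * Gamma (s / k) = (k powr (s / k - 1) * k powr (1 - s / k)) * k_Gamma k s"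
    by simp
  also have "k powr (s / k - 1) * k powr (1 - s / k) = 1"
    using k by (simp flip: powr_add)
  finally show ?thesis by simp
qed

lemma k_Gamma_pos:
  fixes k s :: real
  assumes "k > 0" and "s > 0"
  shows "k_Gamma k s > 0"
  using assms by (simp add: k_Gamma_eq_Gamma)

lemma ln_k_Gamma:
  fixes k s :: real
  assumes "k > 0" and "s > 0"
  shows "ln (k_Gamma k s) = (s / k - 1) * ln k + ln_Gamma (s / k)"
  using assms Gamma_real_pos[of "s / k"]
  by (simp add: k_Gamma_eq_Gamma ln_mult ln_powr ln_Gamma_real_pos del: Gamma_real_pos)

lemma Digamma_combination_nonneg:
  fixes s k a b :: real
  assumes s: "s > 0" and k: "k \<ge> 1" and b: "b \<ge> 0" and b_le_a: "b \<le> a"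
  shows "0 \<le> (a - b) / s + a * Digamma s - b / k * Digamma (s / k) + euler_mascheroni * (a - b / k)"
proof -
  define A where "A = Digamma (s + 1) + euler_mascheroni"
  define B where "B = Digamma (s / k + 1) + euler_mascheroni"
  have "(a - b) / s + a * Digamma s - b / k * Digamma (s / k) + euler_mascheroni * (a - b / k)
      = a * A - b / k * B"
    using s k Digamma_plus1[of s] Digamma_plus1[of "s / k"]
    by (simp add: A_def B_def field_simps)
  moreover have "b / k * B \<le> a * A"
  proof (rule mult_mono)
    have "0 \<le> a * (k - 1)" using k b b_le_a by simp
    thus "b / k \<le> a" using k b_le_a by (simp add: divide_le_eq algebra_simps)
    have "0 < s / k" "s / k \<le> s" using s k by (simp_all add: divide_le_eq)
    thus "B \<le> A" unfolding A_def B_def by (intro add_right_mono Digamma_real_mono) simp_all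
    show "0 \<le> B" using s k Digamma_real_mono[of 1 "s / k + 1"] by (simp add: B_def)
  qed (use b b_le_a in simp)
  ultimately show ?thesis by simp
qed

locale k_Gamma_ratio =
  fixes k a b \<alpha> \<beta> :: real
  assumes k_ge_1: "k \<ge> 1" and b_nonneg: "b \<ge> 0" and b_le_a: "b \<le> a"
    and \<alpha>_pos: "\<alpha> > 0" and \<beta>_nonneg: "\<beta> \<ge> 0"
begin

definition c :: real where
  "c = (k * a * \<beta> * euler_mascheroni - b * \<beta> * euler_mascheroni) / k"

definition \<theta> :: "real \<Rightarrow> real" where
  "\<theta> t = ((\<alpha> + \<beta> * t) powr (a - b) * exp (t * c) * Gamma (\<alpha> + \<beta> * t) powr a)
          / (k powr (- (b * \<beta> * t / k)) * k_Gamma k (\<alpha> + \<beta> * t) powr b)"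

text \<open>The powers of \<open>k\<close> in \<open>\<theta>\<close> and in \<open>\<Gamma>\<^sub>k\<close> combine to the constant \<open>b (1 - \<alpha>/k) ln k\<close>.\<close>

definition log_\<theta> :: "real \<Rightarrow> real" where
  "log_\<theta> t = (a - b) * ln (\<alpha> + \<beta> * t) + t * c + a * ln_Gamma (\<alpha> + \<beta> * t)
              - b * ln_Gamma ((\<alpha> + \<beta> * t) / k) + b * (1 - \<alpha> / k) * ln k"

lemma k_pos: "k > 0"
  using k_ge_1 by simp

lemma arg_pos: "t \<ge> 0 \<Longrightarrow> \<alpha> + \<beta> * t > 0"
  using \<alpha>_pos \<beta>_nonneg by (simp add: add_pos_nonneg)

lemma \<theta>_eq_exp_log_\<theta>:
  assumes "t \<ge> 0"
  shows "\<theta> t = exp (log_\<theta> t)"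
proof -
  define s where "s = \<alpha> + \<beta> * t"
  have s: "s > 0" and sk: "s / k > 0"
    using arg_pos[OF assms] k_pos by (simp_all add: s_def)
  have "\<theta> t = exp ((a - b) * ln s) * exp (t * c) * exp (a * ln (Gamma s))
              / (exp (- (b * \<beta> * t / k) * ln k) * exp (b * ln (k_Gamma k s)))"
    using s k_pos k_Gamma_pos[OF k_pos s] Gamma_real_pos[OF s]
    by (simp add: \<theta>_def powr_def del: Gamma_real_pos flip: s_def)
  also have "\<dots> = exp ((a - b) * ln s + t * c + a * ln (Gamma s)
                       + b * \<beta> * t / k * ln k - b * ln (k_Gamma k s))"
    by (simp add: exp_add exp_diff exp_minus field_simps)
  also have "\<dots> = exp (log_\<theta> t)"
    using s sk k_pos
    by (simp add: log_\<theta>_def ln_k_Gamma ln_Gamma_real_pos s_def field_simps)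
  finally show ?thesis .
qed

lemma log_\<theta>_has_derivative:
  assumes "t \<ge> 0"
  defines "s \<equiv> \<alpha> + \<beta> * t"
  shows "(log_\<theta> has_real_derivative
           \<beta> * ((a - b) / s + a * Digamma s - b / k * Digamma (s / k) + euler_mascheroni * (a - b / k)))
         (at t)"
proof -
  have "s > 0" "s / k > 0"
    using arg_pos[OF assms(1)] k_pos by (simp_all add: s_def)
  hence "(log_\<theta> has_real_derivative
           (a - b) * (\<beta> / s) + c + a * (\<beta> * Digamma s) - b * (\<beta> / k * Digamma (s / k))) (at t)"
    unfolding log_\<theta>_def s_def by (auto intro!: derivative_eq_intros simp: ac_simps)
  thus ?thesis
    using k_pos by (simp add: c_def field_simps)
qed

lemma mono_on_\<theta>: "mono_on {0..} \<theta>"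
proof (rule mono_onI)
  fix x y :: real assume "x \<in> {0..}" "y \<in> {0..}" "x \<le> y"
  have "log_\<theta> x \<le> log_\<theta> y"
  proof (rule DERIV_nonneg_imp_nondecreasing[OF \<open>x \<le> y\<close>])
    fix t assume "x \<le> t" "t \<le> y"
    hence "t \<ge> 0" using \<open>x \<in> {0..}\<close> by simp
    thus "\<exists>D. (log_\<theta> has_real_derivative D) (at t) \<and> 0 \<le> D"
      using log_\<theta>_has_derivative Digamma_combination_nonneg[OF arg_pos k_ge_1 b_nonneg b_le_a]
        \<beta>_nonneg by (blast intro: mult_nonneg_nonneg)
  qed
  thus "\<theta> x \<le> \<theta> y"
    using \<open>x \<in> {0..}\<close> \<open>y \<in> {0..}\<close> by (simp add: \<theta>_eq_exp_log_\<theta>)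
qed

lemma \<theta>_mult_eq:
  assumes "t \<ge> 0" and "u \<ge> 0"
  shows "\<theta> u * (exp (- t * c) * k powr (- (b * \<beta> * t / k)) / (\<alpha> + \<beta> * t) powr (a - b))
       = ((\<alpha> + \<beta> * u) powr (a - b) * exp ((u - t) * c) * Gamma (\<alpha> + \<beta> * u) powr a)
         / ((\<alpha> + \<beta> * t) powr (a - b) * k powr (b * \<beta> * (t - u) / k) * k_Gamma k (\<alpha> + \<beta> * u) powr b)"
proof -
  have "k_Gamma k (\<alpha> + \<beta> * u) > 0" "\<alpha> + \<beta> * t > 0"
    using k_Gamma_pos[OF k_pos arg_pos] assms by (simp_all add: arg_pos)
  moreover have "exp ((u - t) * c) = exp (u * c) * exp (- t * c)"
    by (simp flip: exp_add add: algebra_simps)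
  moreover have "k powr (b * \<beta> * (t - u) / k) = k powr (b * \<beta> * t / k) / k powr (b * \<beta> * u / k)"
    using k_pos by (simp flip: powr_diff add: diff_divide_distrib algebra_simps)
  ultimately show ?thesis
    using k_pos by (simp add: \<theta>_def powr_minus field_simps)
qed

lemma \<theta>_bounds:
  assumes "t \<in> {0<..<1}"
  shows "(\<alpha> powr (a - b) * exp (- t * c) * Gamma \<alpha> powr a)
          / ((\<alpha> + \<beta> * t) powr (a - b) * k powr (b * \<beta> * t / k) * k_Gamma k \<alpha> powr b)
        \<le> Gamma (\<alpha> + \<beta> * t) powr a / k_Gamma k (\<alpha> + \<beta> * t) powr b
      \<and> Gamma (\<alpha> + \<beta> * t) powr a / k_Gamma k (\<alpha> + \<beta> * t) powr b
        \<le> ((\<alpha> + \<beta>) powr (a - b) * exp ((1 - t) * c) * Gamma (\<alpha> + \<beta>) powr a)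
          / ((\<alpha> + \<beta> * t) powr (a - b) * k powr (b * \<beta> / k * (t - 1)) * k_Gamma k (\<alpha> + \<beta>) powr b)"
proof -
  define scale where "scale = exp (- t * c) * k powr (- (b * \<beta> * t / k)) / (\<alpha> + \<beta> * t) powr (a - b)"
  have t: "t \<ge> 0" "t \<le> 1" using assms by simp_all
  have "scale \<ge> 0" by (simp add: scale_def)
  moreover have "\<theta> 0 \<le> \<theta> t" "\<theta> t \<le> \<theta> 1"
    using t by (auto intro: mono_onD[OF mono_on_\<theta>])
  ultimately have "\<theta> 0 * scale \<le> \<theta> t * scale" "\<theta> t * scale \<le> \<theta> 1 * scale"
    by (simp_all add: mult_right_mono)
  moreover have "b * \<beta> * (t - 1) / k = b * \<beta> / k * (t - 1)" by simp
  ultimately show ?thesis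
    using \<theta>_mult_eq[OF t(1), of 0] \<theta>_mult_eq[OF t(1), of t] \<theta>_mult_eq[OF t(1), of 1] t k_pos arg_pos[OF t(1)]
    by (simp add: scale_def)
qed

end

theorem theorem3p9:
  fixes k a b \<alpha> \<beta> :: real
  assumes "k \<ge> 1" and "a > 0" and "b > 0" and "\<alpha> > 0" and "\<beta> > 0" and "a \<ge> b"
  defines "c \<equiv> (k * a * \<beta> * euler_mascheroni - b * \<beta> * euler_mascheroni) / k"
  defines "\<theta> \<equiv> (\<lambda>t::real. ((\<alpha> + \<beta> * t) powr (a - b) * exp (t * c) * Gamma (\<alpha> + \<beta> * t) powr a)
                   / (k powr (- (b * \<beta> * t / k)) * k_Gamma k (\<alpha> + \<beta> * t) powr b))"
  shows "mono_on {0<..} \<theta>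
    \<and> (\<forall>t\<in>{0<..<1}.
        (\<alpha> powr (a - b) * exp (- t * c) * Gamma \<alpha> powr a)
          / ((\<alpha> + \<beta> * t) powr (a - b) * k powr (b * \<beta> * t / k) * k_Gamma k \<alpha> powr b)
        \<le> Gamma (\<alpha> + \<beta> * t) powr a / k_Gamma k (\<alpha> + \<beta> * t) powr b
      \<and> Gamma (\<alpha> + \<beta> * t) powr a / k_Gamma k (\<alpha> + \<beta> * t) powr b
        \<le> ((\<alpha> + \<beta>) powr (a - b) * exp ((1 - t) * c) * Gamma (\<alpha> + \<beta>) powr a)
          / ((\<alpha> + \<beta> * t) powr (a - b) * k powr (b * \<beta> / k * (t - 1)) * k_Gamma k (\<alpha> + \<beta>) powr b))"
proof -
  interpret R: k_Gamma_ratio k a b \<alpha> \<beta>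
    using assms by unfold_locales simp_all
  have c_eq: "c = R.c" by (simp add: c_def R.c_def)
  have \<theta>_eq: "\<theta> = R.\<theta>" by (simp add: fun_eq_iff \<theta>_def R.\<theta>_def c_eq)
  have "mono_on {0<..} R.\<theta>" by (rule mono_on_subset[OF R.mono_on_\<theta>]) auto
  thus ?thesis unfolding c_eq \<theta>_eq using R.\<theta>_bounds by blast
qed

end
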